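(* For odd $n\ge5$, let $\bar P_n$ denote the maximum of $\bar P(\mathsf{M}^{(1)},\mathsf{M}^{(2)})$ over all pairs of dichotomic measurements on the regular $n$-gon state space $\mathcal{S}_n$, and let $r_{2n}^2=\sec(\pi/(2n))$. Then, for every integer $m\ge1$: (i) if $n=4m+1$, $\bar P_n=\frac14\big[2+\cos(m\pi/n)+\sec(\tfrac{\pi}{2n})\sin(m\pi/n)\big]$; (ii) if $n=4m+3$, $\bar P_n=\frac14\big[2+\cos((m+1)\pi/n)+\sec(\tfrac{\pi}{2n})\sin((m+1)\pi/n)\big]$.
   Context: The regular $n$-gon state space $\mathcal{S}_n\subset\mathbb{R}^3$ is the convex hull of $s_j=(r_n\cos(2j\pi/n),\,r_n\sin(2j\pi/n),\,1)^T$, $j=1,\ldots,n$, with $r_n=\sqrt{\sec(\pi/n)}$. Effects are linear functionals $e$ on $\mathbb{R}^3$ with $0\le e\le1$ on $\mathcal{S}_n$; unit effect $u=(0,0,1)$; $\|f\|=\max_{s\in\mathcal{S}_n}|f(s)|$. A dichotomic measurement is a pair of effects $\mathsf{M}_+,\mathsf{M}_-$ with $\mathsf{M}_++\mathsf{M}_-=u$, and $\bar P(\mathsf{M}^{(1)},\mathsf{M}^{(2)})=\frac18\sum_{x,y\in\{+,-\}}\|\mathsf{M}^{(1)}_x+\mathsf{M}^{(2)}_y\|$. *)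

theory Defs
  imports "HOL-Analysis.Analysis"
begin

text \<open>Linear functionals on R^3 are identified with vectors f :: real^3 via s \<mapsto> f \<bullet> s.\<close>

definition rn :: "nat \<Rightarrow> real" where
  "rn n = sqrt (1 / cos (pi / real n))"

definition vertex :: "nat \<Rightarrow> nat \<Rightarrow> real^3" where
  "vertex n j = vector [rn n * cos (2 * real j * pi / real n), rn n * sin (2 * real j * pi / real n), 1]"

definition ngon :: "nat \<Rightarrow> (real^3) set" where
  "ngon n = convex hull (vertex n ` {1..n})"

definition unit_eff :: "real^3" where
  "unit_eff = vector [0, 0, 1]"

definition is_effect :: "nat \<Rightarrow> real^3 \<Rightarrow> bool" where
  "is_effect n e \<longleftrightarrow> (\<forall>s\<in>ngon n. 0 \<le> e \<bullet> s \<and> e \<bullet> s \<le> 1)"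

definition gnorm :: "nat \<Rightarrow> real^3 \<Rightarrow> real" where
  "gnorm n f = (SUP s\<in>ngon n. \<bar>f \<bullet> s\<bar>)"

definition dichotomic :: "nat \<Rightarrow> (real^3) \<times> (real^3) \<Rightarrow> bool" where
  "dichotomic n M \<longleftrightarrow> is_effect n (fst M) \<and> is_effect n (snd M) \<and> fst M + snd M = unit_eff"

definition Pbar :: "nat \<Rightarrow> (real^3) \<times> (real^3) \<Rightarrow> (real^3) \<times> (real^3) \<Rightarrow> real" where
  "Pbar n M1 M2 =
     (1/8) * (gnorm n (fst M1 + fst M2) + gnorm n (fst M1 + snd M2)
            + gnorm n (snd M1 + fst M2) + gnorm n (snd M1 + snd M2))"

definition Pbar_values :: "nat \<Rightarrow> real set" where
  "Pbar_values n = {Pbar n M1 M2 | M1 M2. dichotomic n M1 \<and> dichotomic n M2}"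

end

(* Write a functional f on R^3 at the vertex with angle theta = 2 j pi / n as
   f$3 + rn n * ((f$1, f$2) . (cos theta, sin theta)).  For measurements (a, u - a) and (b, u - b)
   all four norms in Pbar are attained at vertices, and 8 Pbar = 4 + osc (a + b) + osc (a - b),
   where osc is the maximum minus the minimum over the vertices.  If a and b are effects, their
   planar parts p and q oscillate by at most 1 over the n-th roots of unity.  With c = cos (pi / 2n),
   sum-to-product formulas bound osc (a + b) + osc (a - b) by
   4 c (cos t * p . dir (h pi / 2n) + sin t * q . dir ((h + n) pi / 2n)),
   and the oscillation bound gives |p . dir (g pi / 2n)| <= 1 / (2 c) for odd g and <= 1 / (2 c^2)
   for even g.  Since h and h + n have opposite parities, everything reduces to maximising
   cos (i pi / n) + sin (i pi / n) / c over 0 <= i <= (n - 1) / 2, which happens at the integer M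
   nearest to n / 4.  The bound is attained by the two effects whose vertex values are
   (cos (2 (j - m) pi / n) + cos (pi / n)) / (1 + cos (pi / n)) for m = 0 and m = M. *)

theory Submission
  imports Defs
begin

section \<open>Trigonometric estimates\<close>

definition peak :: "nat \<Rightarrow> real \<Rightarrow> real" where
  "peak n t = cos (t * pi / real n) + sin (t * pi / real n) / cos (pi / (2 * real n))"

lemma cos_add_sin_div_diff:
  fixes x y c :: real
  shows "(cos x + sin x / c) - (cos y + sin y / c)
     = 2 * sin ((x - y) / 2) * (cos ((x + y) / 2) / c - sin ((x + y) / 2))"
proof -
  have "cos x - cos y = 2 * sin ((x + y) / 2) * sin ((y - x) / 2)"
    by (rule cos_diff_cos)
  moreover have "sin x - sin y = 2 * sin ((x - y) / 2) * cos ((x + y) / 2)"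
    by (rule sin_diff_sin)
  moreover have "sin ((y - x) / 2) = - sin ((x - y) / 2)"
    by (metis minus_diff_eq minus_divide_left sin_minus)
  ultimately have "(cos x - cos y) + (sin x - sin y) / c
      = 2 * sin ((x - y) / 2) * (cos ((x + y) / 2) / c - sin ((x + y) / 2))"
    by (simp add: algebra_simps diff_divide_distrib)
  then show ?thesis
    by (simp add: diff_divide_distrib)
qed

lemma sin_le_cos_of_le_quarter_pi:
  assumes "0 \<le> x" "x \<le> pi / 4"
  shows "sin x \<le> cos x"
proof -
  have "cos (pi / 2 - x) \<le> cos x"
    using assms by (intro cos_monotone_0_pi_le) auto
  then show ?thesis
    by (simp add: cos_sin_eq)
qed

lemma cos_le_cos_double_mult_sin:
  assumes x: "0 \<le> x" "x \<le> pi / 4" and s: "pi / 4 + x \<le> s" "s \<le> pi / 2"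
  shows "cos s \<le> cos (2 * x) * sin s"
proof -
  define s0 where "s0 = pi / 4 + x"
  define d where "d = s - s0"
  have sx: "0 \<le> sin x" "0 \<le> cos x" "sin x \<le> cos x"
    using x by (auto intro!: sin_ge_zero cos_ge_zero sin_le_cos_of_le_quarter_pi)
  have c2: "cos (2 * x) = (cos x - sin x) * (cos x + sin x)"
    by (subst cos_double) (simp add: power2_eq_square algebra_simps)
  have cs0: "cos s0 = (cos x - sin x) * (sqrt 2 / 2)"
    unfolding s0_def by (simp add: cos_add cos_45 sin_45 algebra_simps)
  have ss0: "sin s0 = (cos x + sin x) * (sqrt 2 / 2)"
    unfolding s0_def by (simp add: sin_add cos_45 sin_45 algebra_simps)
  have sq: "(cos x + sin x)^2 = 1 + 2 * sin x * cos x"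
    using sin_cos_squared_add[of x] by (simp add: power2_eq_square algebra_simps)
  (* at s0 the claim is (cos x + sin x)^2 = 1 + sin (2 x) >= 1 in disguise *)
  have key: "cos s0 \<le> cos (2 * x) * sin s0"
  proof -
    have "cos (2 * x) * sin s0 = (cos x - sin x) * (cos x + sin x)^2 * (sqrt 2 / 2)"
      unfolding c2 ss0 power2_eq_square by algebra
    then have "cos (2 * x) * sin s0 = (cos x - sin x) * (1 + 2 * sin x * cos x) * (sqrt 2 / 2)"
      unfolding sq .
    moreover have "cos x - sin x \<le> (cos x - sin x) * (1 + 2 * sin x * cos x)"
    proof -
      have "0 \<le> (cos x - sin x) * (2 * sin x * cos x)"
        using sx by simp
      then show ?thesis
        by (simp add: algebra_simps)
    qed
    ultimately show ?thesis
      using cs0 mult_right_mono[of "cos x - sin x" "(cos x - sin x) * (1 + 2 * sin x * cos x)" "sqrt 2 / 2"]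
      by simp
  qed
  have "0 \<le> sin s0" "0 \<le> cos s0" "0 \<le> sin d" "0 \<le> cos d" "0 \<le> cos (2 * x)"
    using x s unfolding s0_def d_def by (auto intro!: sin_ge_zero cos_ge_zero)
  then have "cos s0 * cos d \<le> cos (2 * x) * sin s0 * cos d"
    and "- sin s0 * sin d \<le> cos (2 * x) * cos s0 * sin d"
    using key by (auto intro: mult_right_mono order.trans[of _ 0] mult_nonneg_nonneg)
  moreover have "s = s0 + d"
    unfolding d_def by simp
  ultimately show ?thesis
    by (simp add: cos_add sin_add algebra_simps)
qed

lemma cos_pi_div_double_pos:
  fixes n :: nat
  assumes "1 < n"
  shows "0 < cos (pi / (2 * real n))"
proof -
  have "pi / (2 * real n) < pi / 2"
    using assms by (intro divide_strict_left_mono) auto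
  then show ?thesis
    using assms by (intro cos_gt_zero) auto
qed

lemma cos_add_sin_div_le_of_sum_le:
  fixes x y c :: real
  assumes c: "0 < c" "c \<le> 1" and xy: "x \<le> y" "y - x \<le> 2 * pi" "0 \<le> x + y" "x + y \<le> pi / 2"
  shows "cos x + sin x / c \<le> cos y + sin y / c"
proof -
  have "0 \<le> sin ((y - x) / 2)"
    using xy by (intro sin_ge_zero) auto
  moreover have "sin ((x + y) / 2) \<le> cos ((x + y) / 2)" "0 \<le> cos ((x + y) / 2)"
    using xy pi_gt_zero by (auto intro!: sin_le_cos_of_le_quarter_pi cos_ge_zero)
  moreover have "cos ((x + y) / 2) * c \<le> cos ((x + y) / 2)"
    using c \<open>0 \<le> cos ((x + y) / 2)\<close> mult_left_mono[of c 1] by simp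
  then have "cos ((x + y) / 2) \<le> cos ((x + y) / 2) / c"
    using c by (simp add: le_divide_eq)
  ultimately have "0 \<le> sin ((y - x) / 2) * (cos ((x + y) / 2) / c - sin ((x + y) / 2))"
    by simp
  moreover have "sin ((x - y) / 2) = - sin ((y - x) / 2)"
    by (metis minus_diff_eq minus_divide_left sin_minus)
  then have "cos x + sin x / c - (cos y + sin y / c)
      = - 2 * (sin ((y - x) / 2) * (cos ((x + y) / 2) / c - sin ((x + y) / 2)))"
    unfolding cos_add_sin_div_diff by simp
  ultimately show ?thesis
    by linarith
qed

lemma cos_add_sin_div_le_of_sum_ge:
  fixes x y e :: real
  assumes e: "0 \<le> e" "e < pi / 4" and xy: "y \<le> x" "x - y \<le> 2 * pi" "pi / 2 + 2 * e \<le> x + y" "x + y \<le> pi"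
  shows "cos x + sin x / cos (2 * e) \<le> cos y + sin y / cos (2 * e)"
proof -
  have c: "0 < cos (2 * e)"
    by (rule cos_gt_zero_pi) (use e pi_gt_zero in linarith)+
  have "0 \<le> sin ((x - y) / 2)"
    using xy by (intro sin_ge_zero) auto
  moreover have "cos ((x + y) / 2) \<le> cos (2 * e) * sin ((x + y) / 2)"
    using e xy by (intro cos_le_cos_double_mult_sin) auto
  then have "cos ((x + y) / 2) / cos (2 * e) - sin ((x + y) / 2) \<le> 0"
    using c by (simp add: divide_le_eq mult.commute)
  ultimately have "sin ((x - y) / 2) * (cos ((x + y) / 2) / cos (2 * e) - sin ((x + y) / 2)) \<le> 0"
    by (rule mult_nonneg_nonpos)
  moreover have "cos x + sin x / cos (2 * e) - (cos y + sin y / cos (2 * e))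
      = 2 * (sin ((x - y) / 2) * (cos ((x + y) / 2) / cos (2 * e) - sin ((x + y) / 2)))"
    unfolding cos_add_sin_div_diff by simp
  ultimately show ?thesis
    by linarith
qed

(* For odd n the two bounds on M say n = 4 M - 1 or n = 4 M + 1: M is the integer nearest to n / 4. *)
lemma peak_le_peak:
  fixes n :: nat and i M :: int
  assumes n: "3 \<le> n" and i: "0 \<le> i" "2 * i + 1 \<le> n" and M: "4 * M - 2 \<le> n" "n \<le> 4 * M + 1"
  shows "peak n i \<le> peak n M"
proof -
  define u where "u = pi / (2 * real n)"
  have u: "0 < u" "pi = (2 * real n) * u" "pi / 2 = n * u" "pi / 4 = (n / 2) * u"
    using n by (simp_all add: u_def)
  have mono: "a * u \<le> b * u" if "a \<le> b" for a b :: real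
    using u(1) that by simp
  have sum_diff: "i * pi / real n + M * pi / real n = 2 * ((i + M) * u)"
    "M * pi / real n - i * pi / real n = 2 * ((M - i) * u)" "i * pi / real n - M * pi / real n = 2 * ((i - M) * u)"
    using n by (simp_all add: u_def field_simps)
  consider "i < M" | "i = M" | "M < i"
    by linarith
  then show ?thesis
  proof cases
    case 1
    have bounds: "(M - i) * u \<le> (2 * real n) * u" "(i + M) * u \<le> (n / 2) * u" "0 \<le> (M - i) * u" "0 \<le> (i + M) * u"
      using 1 i M u(1) by (intro mono; linarith | simp)+
    have "0 < cos (pi / (2 * real n))"
      using n by (simp add: cos_pi_div_double_pos)
    then show ?thesis
      unfolding peak_def
      by (rule cos_add_sin_div_le_of_sum_le) (use bounds sum_diff u cos_le_one[of "pi / (2 * real n)"] in linarith)+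
  next
    case 3
    have bounds: "(i - M) * u \<le> (2 * real n) * u" "((real n + 1) / 2) * u \<le> (i + M) * u"
      "(i + M) * u \<le> n * u" "0 \<le> (i - M) * u"
      using 3 i M n u(1) by (intro mono; simp; linarith | simp)+
    have more: "((real n + 1) / 2) * u = n * u / 2 + u / 2" "u < n * u"
      using n u(1) by (simp_all add: algebra_simps)
    have "0 \<le> u / 2" "u / 2 < pi / 4"
      using u more(2) by linarith+
    moreover have "M * pi / real n \<le> i * pi / real n" "i * pi / real n - M * pi / real n \<le> 2 * pi"
      using sum_diff(3) bounds(1,4) u(2) by linarith+
    moreover have "pi / 2 + 2 * (u / 2) \<le> i * pi / real n + M * pi / real n"
      "i * pi / real n + M * pi / real n \<le> pi"
      using sum_diff(1) bounds(2,3) more(1) u(2,3) by linarith+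
    ultimately have "cos (i * pi / real n) + sin (i * pi / real n) / cos (2 * (u / 2))
        \<le> cos (M * pi / real n) + sin (M * pi / real n) / cos (2 * (u / 2))"
      by (rule cos_add_sin_div_le_of_sum_ge)
    then show ?thesis
      by (simp add: peak_def u_def)
  qed simp
qed

lemma int_eq_double_mult_plus_minus:
  fixes j p :: int
  assumes "0 < p"
  obtains q r where "0 \<le> r" "r \<le> p" "j = 2 * p * q + r \<or> j = 2 * p * q - r"
proof -
  let ?q = "j div (2 * p)" and ?r = "j mod (2 * p)"
  have j: "j = 2 * p * ?q + ?r" and r: "0 \<le> ?r" "?r < 2 * p"
    using assms by simp_all
  show ?thesis
  proof (cases "?r \<le> p")
    case True
    then show ?thesis
      using that[of ?r ?q] j r by blast
  next
    case False
    have "j = 2 * p * (?q + 1) - (2 * p - ?r)"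
      using j by (simp add: algebra_simps)
    then show ?thesis
      using that[of "2 * p - ?r" "?q + 1"] False r by auto
  qed
qed

lemma abs_cos_sin_half_step_reduce:
  fixes n :: nat and j :: int
  assumes "0 < n"
  obtains r :: int where "0 \<le> r" "r \<le> n" "even (j - r)"
    "\<bar>cos (j * pi / (2 * real n))\<bar> = \<bar>cos (r * pi / (2 * real n))\<bar>"
    "\<bar>sin (j * pi / (2 * real n))\<bar> = \<bar>sin (r * pi / (2 * real n))\<bar>"
proof -
  have "0 < int n"
    using assms by simp
  then obtain q r where r: "0 \<le> r" "r \<le> int n" and j: "j = 2 * int n * q + r \<or> j = 2 * int n * q - r"
    by (rule int_eq_double_mult_plus_minus)
  have "j * pi / (2 * real n) = r * pi / (2 * real n) + q * pi \<or> j * pi / (2 * real n) = - (r * pi / (2 * real n)) + q * pi"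
    using j
  proof
    assume "j = 2 * int n * q + r"
    then have "j * pi / (2 * real n) = r * pi / (2 * real n) + q * pi"
      using assms by (simp add: field_simps)
    then show ?thesis ..
  next
    assume j_eq: "j = 2 * int n * q - r"
    have "j * pi / (2 * real n) = - (r * pi / (2 * real n)) + q * pi"
      unfolding j_eq using assms by (simp add: field_simps)
    then show ?thesis ..
  qed
  then have "\<bar>cos (j * pi / (2 * real n))\<bar> = \<bar>cos (r * pi / (2 * real n))\<bar> \<and>
      \<bar>sin (j * pi / (2 * real n))\<bar> = \<bar>sin (r * pi / (2 * real n))\<bar>"
    by (auto simp: cos_add sin_add cos_diff sin_diff abs_mult mult.commute[of _ pi])
  moreover have "even (j - r)"
    using j by auto
  ultimately show ?thesis
    using that r by blast
qed

lemma half_angle_le_peak: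
  fixes n :: nat and j M :: int
  assumes n: "odd n" "3 \<le> n" and M: "4 * M - 2 \<le> n" "n \<le> 4 * M + 1"
  defines "t \<equiv> j * pi / (2 * real n)" and "c \<equiv> cos (pi / (2 * real n))"
  shows "even j \<Longrightarrow> \<bar>cos t\<bar> + \<bar>sin t\<bar> / c \<le> peak n M"
    and "odd j \<Longrightarrow> \<bar>cos t\<bar> / c + \<bar>sin t\<bar> \<le> peak n M"
proof -
  obtain r :: int where r: "0 \<le> r" "r \<le> n" "even (j - r)"
    and abs_t: "\<bar>cos t\<bar> = \<bar>cos (r * pi / (2 * real n))\<bar>" "\<bar>sin t\<bar> = \<bar>sin (r * pi / (2 * real n))\<bar>"
    using abs_cos_sin_half_step_reduce[of n j] n unfolding t_def by auto
  define s where "s = r * pi / (2 * real n)"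
  have "r * pi / (2 * real n) \<le> n * pi / (2 * real n)"
    using r by (intro divide_right_mono mult_right_mono) auto
  then have "0 \<le> s" "s \<le> pi / 2"
    using r n by (auto simp: s_def)
  then have t: "\<bar>cos t\<bar> = cos s" "\<bar>sin t\<bar> = sin s"
    unfolding abs_t s_def[symmetric] by (simp_all add: cos_ge_zero sin_ge_zero)
  obtain N where N: "n = 2 * N + 1"
    using n by (auto elim: oddE)
  show "\<bar>cos t\<bar> + \<bar>sin t\<bar> / c \<le> peak n M" if j: "even j"
  proof -
    obtain i where i: "r = 2 * i"
      using r(3) j by (auto elim: evenE)
    have "\<bar>cos t\<bar> + \<bar>sin t\<bar> / c = peak n i"
      using n unfolding t s_def peak_def c_def i by simp
    also have "\<dots> \<le> peak n M"
      using i r N n M by (intro peak_le_peak) auto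
    finally show ?thesis .
  qed
  show "\<bar>cos t\<bar> / c + \<bar>sin t\<bar> \<le> peak n M" if j: "odd j"
  proof -
    obtain i where i: "r = 2 * i + 1"
      using r(3) j by (auto elim: oddE)
    have "s = pi / 2 - (N - i) * pi / real n"
      using N i by (simp add: s_def field_simps)
    then have "\<bar>cos t\<bar> / c + \<bar>sin t\<bar> = peak n (N - i)"
      unfolding t peak_def c_def by (simp add: cos_diff sin_diff)
    also have "\<dots> \<le> peak n M"
      using i r N n M by (intro peak_le_peak) auto
    finally show ?thesis .
  qed
qed

lemma abs_sin_int_pi_div_le:
  fixes n :: nat and d :: int
  assumes "odd n"
  shows "\<bar>sin (d * pi / real n)\<bar> \<le> cos (pi / (2 * real n))"
proof -
  have n: "0 < n"
    using assms by (auto intro: odd_pos)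
  obtain r :: int where r: "0 \<le> r" "r \<le> n" "even (2 * d - r)"
    and abs_sin: "\<bar>sin ((2 * d) * pi / (2 * real n))\<bar> = \<bar>sin (r * pi / (2 * real n))\<bar>"
    using abs_cos_sin_half_step_reduce[of n "2 * d"] n by auto
  define s where "s = r * pi / (2 * real n)"
  define h where "h = pi / (2 * real n)"
  have "r + 1 \<le> int n"
    using r assms by (cases "r = int n") auto
  then have "real_of_int (r + 1) \<le> real_of_int (int n)"
    by (simp only: of_int_le_iff)
  then have "r * pi / (2 * real n) \<le> (n - 1) * pi / (2 * real n)"
    by (intro divide_right_mono mult_right_mono) auto
  also have "\<dots> = pi / 2 - pi / (2 * real n)"
    using n by (simp add: field_simps)
  finally have "s \<le> pi / 2 - h"
    by (simp add: s_def h_def)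
  moreover have "0 \<le> s" "0 < h"
    using r n by (simp_all add: s_def h_def)
  ultimately have "0 \<le> sin s" "sin s \<le> sin (pi / 2 - h)"
    using pi_gt_zero by (intro sin_ge_zero sin_monotone_2pi_le; linarith)+
  moreover have "d * pi / real n = (2 * d) * pi / (2 * real n)"
    by simp
  ultimately show ?thesis
    using abs_sin by (simp add: s_def h_def sin_cos_eq)
qed

lemma cos_pi_div_pos:
  fixes n :: nat
  assumes "2 < n"
  shows "0 < cos (pi / real n)"
proof -
  have "pi / real n < pi / 2"
    using assms by (intro divide_strict_left_mono) auto
  then show ?thesis
    using assms by (intro cos_gt_zero) auto
qed

lemma cos_pi_div_eq: "cos (pi / real n) = 2 * cos (pi / (2 * real n))^2 - 1"
  using cos_double_cos[of "pi / (2 * real n)"] by simp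

lemma neg_cos_pi_div_le:
  fixes n :: nat and d :: int
  assumes "odd n"
  shows "- cos (pi / real n) \<le> cos (2 * real_of_int d * pi / real n)"
proof -
  have "\<bar>sin (d * pi / real n)\<bar> \<le> cos (pi / (2 * real n))"
    using assms by (rule abs_sin_int_pi_div_le)
  then have "sin (d * pi / real n)^2 \<le> cos (pi / (2 * real n))^2"
    by (metis abs_ge_zero power2_abs power_mono)
  then show ?thesis
    using cos_double_sin[of "d * pi / real n"] by (simp add: cos_pi_div_eq mult.assoc)
qed

lemma obtain_sin_eq_cos_half_step:
  fixes n :: nat and x :: int
  assumes "odd n"
  obtains d :: int where "even (d - x)" "sin (d * pi / real n) = cos (pi / (2 * real n))"
proof -
  obtain N where N: "n = 2 * N + 1"
    using assms by (auto elim: oddE)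
  have "N * pi / real n = pi / 2 - pi / (2 * real n)" "(N + 1) * pi / real n = pi / 2 + pi / (2 * real n)"
    using N by (simp_all add: field_simps)
  then have "sin (int N * pi / real n) = cos (pi / (2 * real n))" "sin (int (N + 1) * pi / real n) = cos (pi / (2 * real n))"
    by (simp_all add: sin_cos_eq)
  then show ?thesis
    using that[of "int N"] that[of "int (N + 1)"] by (cases "even (int N - x)") auto
qed

lemma obtain_cos_diff_eq:
  fixes n :: nat and x :: int
  assumes "odd n"
  obtains i1 i2 :: int
  where "cos ((2 * i1 - x) * pi / real n) - cos ((2 * i2 - x) * pi / real n) = 1 + cos (pi / real n)"
proof -
  obtain N where N: "n = 2 * N + 1"
    using assms by (auto elim: oddE)
  show ?thesis
  proof (cases "even x")
    case True
    then obtain t where t: "x = 2 * t"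
      by (auto elim: evenE)
    have "(2 * (t + int N + 1) - x) * pi / real n = pi / real n + pi"
      using t N by (simp add: field_simps)
    then have "cos ((2 * t - x) * pi / real n) = 1" "cos ((2 * (t + int N + 1) - x) * pi / real n) = - cos (pi / real n)"
      using t by simp_all
    then show ?thesis
      by (intro that[of t "t + int N + 1"]) simp
  next
    case False
    then obtain t where t: "x = 2 * t + 1"
      by (auto elim: oddE)
    have "(2 * (t + int N + 1) - x) * pi / real n = pi"
      using t N by (simp add: field_simps)
    then have "cos ((2 * (t + 1) - x) * pi / real n) = cos (pi / real n)" "cos ((2 * (t + int N + 1) - x) * pi / real n) = - 1"
      using t by simp_all
    then show ?thesis
      by (intro that[of "t + 1" "t + int N + 1"]) simp
  qed
qed

lemma obtain_sin_diff_eq: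
  fixes n :: nat and x :: int
  assumes "odd n"
  obtains k1 k2 :: int
  where "sin ((2 * k1 - x) * pi / real n) - sin ((2 * k2 - x) * pi / real n) = 2 * cos (pi / (2 * real n))"
proof -
  obtain d where d: "even (d - x)" "sin (d * pi / real n) = cos (pi / (2 * real n))"
    using obtain_sin_eq_cos_half_step[OF assms] .
  from d(1) obtain e where e: "d - x = 2 * e"
    by (rule evenE)
  have "2 * (x + e) - x = d" "2 * (- e) - x = - d"
    using e by simp_all
  then have "sin ((2 * (x + e) - x) * pi / real n) = cos (pi / (2 * real n))"
    and "sin ((2 * (- e) - x) * pi / real n) = - cos (pi / (2 * real n))"
    using d(2) by (simp_all only: of_int_minus mult_minus_left minus_divide_left[symmetric] sin_minus)
  then show ?thesis
    by (intro that[of "x + e" "- e"]) simp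
qed

lemma mult_le_abs_mult_bound:
  fixes s x B :: real
  assumes "\<bar>x\<bar> \<le> B"
  shows "s * x \<le> \<bar>s\<bar> * B"
proof -
  have "s * x \<le> \<bar>s\<bar> * \<bar>x\<bar>"
    by (metis abs_ge_self abs_mult)
  also have "\<dots> \<le> \<bar>s\<bar> * B"
    using assms by (rule mult_left_mono) simp
  finally show ?thesis .
qed

section \<open>Planar functionals of small oscillation on the roots of unity\<close>

definition dir :: "real \<Rightarrow> real \<times> real" where
  "dir \<theta> = (cos \<theta>, sin \<theta>)"

lemma dir_add_dir: "dir a + dir b = (2 * cos ((a - b) / 2)) *\<^sub>R dir ((a + b) / 2)"
  by (simp add: dir_def cos_plus_cos sin_plus_sin algebra_simps)

lemma dir_diff_dir: "dir a - dir b = (2 * sin ((a - b) / 2)) *\<^sub>R dir ((a + b) / 2 + pi / 2)"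
proof -
  have "sin ((b - a) / 2) = - sin ((a - b) / 2)"
    by (metis minus_diff_eq minus_divide_left sin_minus)
  then show ?thesis
    by (simp add: dir_def cos_diff_cos sin_diff_sin cos_add sin_add algebra_simps)
qed

lemma dir_add_pi: "dir (\<theta> + pi) = - dir \<theta>"
  by (simp add: dir_def)

lemma inner_add_diff_dir:
  "(p + q) \<bullet> dir a + (p - q) \<bullet> dir b
    = 2 * cos ((a - b) / 2) * (p \<bullet> dir ((a + b) / 2)) + 2 * sin ((a - b) / 2) * (q \<bullet> dir ((a + b) / 2 + pi / 2))"
proof -
  have "(p + q) \<bullet> dir a + (p - q) \<bullet> dir b = p \<bullet> (dir a + dir b) + q \<bullet> (dir a - dir b)"
    by (simp add: inner_add_left inner_diff_left inner_add_right inner_diff_right)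
  then show ?thesis
    unfolding dir_add_dir dir_diff_dir by simp
qed

lemma dir_diff_dir_roots:
  fixes n :: nat and i j :: int
  assumes "0 < n"
  shows "dir (2 * real_of_int i * pi / real n) - dir (2 * real_of_int j * pi / real n)
    = (2 * sin ((i - j) * pi / real n)) *\<^sub>R dir ((2 * (i + j) + n) * pi / (2 * real n))"
proof -
  have "(2 * real_of_int i * pi / real n - 2 * real_of_int j * pi / real n) / 2 = (i - j) * pi / real n"
    and "(2 * real_of_int i * pi / real n + 2 * real_of_int j * pi / real n) / 2 + pi / 2 = (2 * (i + j) + n) * pi / (2 * real n)"
    using assms by (simp_all add: field_simps)
  then show ?thesis
    using dir_diff_dir[of "2 * real_of_int i * pi / real n" "2 * real_of_int j * pi / real n"] by simp
qed

definition osc_le_one :: "nat \<Rightarrow> real \<times> real \<Rightarrow> bool" where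
  "osc_le_one n p \<longleftrightarrow>
    (\<forall>i j. \<bar>p \<bullet> (dir (2 * real_of_int i * pi / real n) - dir (2 * real_of_int j * pi / real n))\<bar> \<le> 1)"

lemma osc_dir_odd_bound:
  fixes n :: nat and g :: int
  assumes n: "odd n" "3 \<le> n" and p: "osc_le_one n p" and g: "odd g"
  shows "\<bar>p \<bullet> dir (g * pi / (2 * real n))\<bar> \<le> 1 / (2 * cos (pi / (2 * real n)))"
proof -
  obtain h where h: "g = 2 * h + 1"
    using g by (auto elim: oddE)
  obtain N where N: "n = 2 * N + 1"
    using n by (auto elim: oddE)
  (* two vertices k + d and k with sin (d pi / n) = c and 2 ((k + d) + k) + n = g *)
  obtain d where d: "even (d - (h - N))" "sin (d * pi / real n) = cos (pi / (2 * real n))"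
    using obtain_sin_eq_cos_half_step[OF n(1)] .
  then obtain k where k: "h - N - d = 2 * k"
    by (metis evenE minus_diff_eq even_minus)
  have "2 * ((k + d) + k) + int n = g"
    using h k N by simp
  then have "dir (2 * real_of_int (k + d) * pi / real n) - dir (2 * real_of_int k * pi / real n)
      = (2 * cos (pi / (2 * real n))) *\<^sub>R dir (g * pi / (2 * real n))"
    using dir_diff_dir_roots[of n "k + d" k] n d(2) by simp
  moreover have "\<bar>p \<bullet> (dir (2 * real_of_int (k + d) * pi / real n) - dir (2 * real_of_int k * pi / real n))\<bar> \<le> 1"
    using p unfolding osc_le_one_def by blast
  ultimately have "\<bar>2 * cos (pi / (2 * real n)) * (p \<bullet> dir (g * pi / (2 * real n)))\<bar> \<le> 1"
    by simp
  moreover have "0 < cos (pi / (2 * real n))"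
    using n by (intro cos_pi_div_double_pos) auto
  ultimately show ?thesis
    by (simp add: abs_mult le_divide_eq mult.commute)
qed

lemma osc_dir_even_bound:
  fixes n :: nat and g :: int
  assumes n: "odd n" "3 \<le> n" and p: "osc_le_one n p" and g: "even g"
  shows "\<bar>p \<bullet> dir (g * pi / (2 * real n))\<bar> \<le> 1 / (2 * cos (pi / (2 * real n))^2)"
proof -
  define c where "c = cos (pi / (2 * real n))"
  have c: "0 < c"
    unfolding c_def using n by (intro cos_pi_div_double_pos) auto
  (* an even half-step direction is the normalised sum of its two odd neighbours *)
  have "((g + 1) * pi / (2 * real n) - (g - 1) * pi / (2 * real n)) / 2 = pi / (2 * real n)"
    and "((g + 1) * pi / (2 * real n) + (g - 1) * pi / (2 * real n)) / 2 = g * pi / (2 * real n)"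
    using n by (simp_all add: field_simps)
  from dir_add_dir[of "(g + 1) * pi / (2 * real n)" "(g - 1) * pi / (2 * real n)", unfolded this]
  have "dir ((g + 1) * pi / (2 * real n)) + dir ((g - 1) * pi / (2 * real n)) = (2 * c) *\<^sub>R dir (g * pi / (2 * real n))"
    unfolding c_def .
  then have "2 * c * \<bar>p \<bullet> dir (g * pi / (2 * real n))\<bar>
      = \<bar>p \<bullet> dir ((g + 1) * pi / (2 * real n)) + p \<bullet> dir ((g - 1) * pi / (2 * real n))\<bar>"
    using c by (simp add: abs_mult flip: inner_add_right)
  also have "\<dots> \<le> \<bar>p \<bullet> dir ((g + 1) * pi / (2 * real n))\<bar> + \<bar>p \<bullet> dir ((g - 1) * pi / (2 * real n))\<bar>"
    by (rule abs_triangle_ineq)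
  also have "\<dots> \<le> 1 / (2 * c) + 1 / (2 * c)"
    using g n p unfolding c_def by (intro add_mono osc_dir_odd_bound) auto
  finally have "2 * c * \<bar>p \<bullet> dir (g * pi / (2 * real n))\<bar> \<le> 1 / c"
    by simp
  then show ?thesis
    unfolding c_def[symmetric] using c by (simp add: field_simps power2_eq_square)
qed

lemma abs_inner_dir_odd_shift:
  fixes n :: nat and g :: int
  assumes "0 < n" "odd g"
  obtains g' :: int where "odd g'" "\<bar>p \<bullet> dir (g * pi / (2 * real n))\<bar> = p \<bullet> dir (g' * pi / (2 * real n))"
proof (cases "0 \<le> p \<bullet> dir (g * pi / (2 * real n))")
  case True
  then show ?thesis
    using that[of g] assms by simp
next
  case False
  have "(g + 2 * int n) * pi / (2 * real n) = g * pi / (2 * real n) + pi"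
    using assms by (simp add: field_simps)
  then have "p \<bullet> dir ((g + 2 * int n) * pi / (2 * real n)) = - (p \<bullet> dir (g * pi / (2 * real n)))"
    by (simp add: dir_add_pi)
  then show ?thesis
    using that[of "g + 2 * int n"] assms False by simp
qed

lemma osc_cos_sin_le_peak:
  fixes n :: nat and h j M :: int
  assumes n: "odd n" "3 \<le> n" and M: "4 * M - 2 \<le> n" "n \<le> 4 * M + 1"
    and p: "osc_le_one n p" and q: "osc_le_one n q" and hj: "odd (h + j)"
  shows "cos (j * pi / (2 * real n)) * (p \<bullet> dir (h * pi / (2 * real n)))
      + sin (j * pi / (2 * real n)) * (q \<bullet> dir ((h + int n) * pi / (2 * real n)))
    \<le> peak n M / (2 * cos (pi / (2 * real n)))"
proof -
  define c where "c = cos (pi / (2 * real n))"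
  define t where "t = j * pi / (2 * real n)"
  have c: "0 < c"
    unfolding c_def using n by (intro cos_pi_div_double_pos) auto
  show ?thesis
  proof (cases "even j")
    case True
    then have "odd h" "even (h + int n)"
      using hj n by simp_all
    then have "\<bar>p \<bullet> dir (h * pi / (2 * real n))\<bar> \<le> 1 / (2 * c)"
      and "\<bar>q \<bullet> dir ((h + int n) * pi / (2 * real n))\<bar> \<le> 1 / (2 * c^2)"
      unfolding c_def using n p q by (simp_all add: osc_dir_odd_bound osc_dir_even_bound del: of_int_add)
    then have "cos t * (p \<bullet> dir (h * pi / (2 * real n))) + sin t * (q \<bullet> dir ((h + int n) * pi / (2 * real n)))
        \<le> \<bar>cos t\<bar> * (1 / (2 * c)) + \<bar>sin t\<bar> * (1 / (2 * c^2))"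
      by (intro add_mono mult_le_abs_mult_bound)
    also have "\<dots> = (\<bar>cos t\<bar> + \<bar>sin t\<bar> / c) / (2 * c)"
      using c by (simp add: field_simps power2_eq_square)
    also have "\<dots> \<le> peak n M / (2 * c)"
      using half_angle_le_peak(1)[OF n M True] c by (simp add: t_def c_def divide_right_mono)
    finally show ?thesis
      by (simp add: t_def c_def)
  next
    case False
    then have "even h" "odd (h + int n)"
      using hj n by simp_all
    then have "\<bar>p \<bullet> dir (h * pi / (2 * real n))\<bar> \<le> 1 / (2 * c^2)"
      and "\<bar>q \<bullet> dir ((h + int n) * pi / (2 * real n))\<bar> \<le> 1 / (2 * c)"
      unfolding c_def using n p q by (simp_all add: osc_dir_odd_bound osc_dir_even_bound del: of_int_add)
    then have "cos t * (p \<bullet> dir (h * pi / (2 * real n))) + sin t * (q \<bullet> dir ((h + int n) * pi / (2 * real n)))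
        \<le> \<bar>cos t\<bar> * (1 / (2 * c^2)) + \<bar>sin t\<bar> * (1 / (2 * c))"
      by (intro add_mono mult_le_abs_mult_bound)
    also have "\<dots> = (\<bar>cos t\<bar> / c + \<bar>sin t\<bar>) / (2 * c)"
      using c by (simp add: field_simps power2_eq_square)
    also have "\<dots> \<le> peak n M / (2 * c)"
      using half_angle_le_peak(2)[OF n M] False c by (simp add: t_def c_def divide_right_mono)
    finally show ?thesis
      by (simp add: t_def c_def)
  qed
qed

lemma osc_pair_le_peak:
  fixes n :: nat and g1 g2 M :: int
  assumes n: "odd n" "3 \<le> n" and M: "4 * M - 2 \<le> n" "n \<le> 4 * M + 1"
    and p: "osc_le_one n p" and q: "osc_le_one n q" and g: "odd g1" "odd g2"
  shows "(p + q) \<bullet> dir (g1 * pi / (2 * real n)) + (p - q) \<bullet> dir (g2 * pi / (2 * real n))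
    \<le> peak n M / cos (pi / (2 * real n))"
proof -
  obtain h1 h2 where h: "g1 = 2 * h1 + 1" "g2 = 2 * h2 + 1"
    using g by (auto elim!: oddE)
  have half_angles: "(g1 * pi / (2 * real n) - g2 * pi / (2 * real n)) / 2 = (h1 - h2) * pi / (2 * real n)"
    "(g1 * pi / (2 * real n) + g2 * pi / (2 * real n)) / 2 = (h1 + h2 + 1) * pi / (2 * real n)"
    "(h1 + h2 + 1) * pi / (2 * real n) + pi / 2 = ((h1 + h2 + 1) + int n) * pi / (2 * real n)"
    using n by (simp_all add: h field_simps)
  have "(p + q) \<bullet> dir (g1 * pi / (2 * real n)) + (p - q) \<bullet> dir (g2 * pi / (2 * real n))
      = 2 * (cos ((h1 - h2) * pi / (2 * real n)) * (p \<bullet> dir ((h1 + h2 + 1) * pi / (2 * real n)))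
        + sin ((h1 - h2) * pi / (2 * real n)) * (q \<bullet> dir ((h1 + h2 + 1 + int n) * pi / (2 * real n))))"
    unfolding inner_add_diff_dir half_angles by (simp only: distrib_left mult.assoc)
  also have "\<dots> \<le> 2 * (peak n M / (2 * cos (pi / (2 * real n))))"
    using n M p q by (intro mult_left_mono osc_cos_sin_le_peak) simp_all
  finally show ?thesis
    by simp
qed

lemma osc_sum_diff_le_peak:
  fixes n :: nat and i j k l M :: int
  assumes n: "odd n" "3 \<le> n" and M: "4 * M - 2 \<le> n" "n \<le> 4 * M + 1"
    and p: "osc_le_one n p" and q: "osc_le_one n q"
  shows "(p + q) \<bullet> (dir (2 * real_of_int i * pi / real n) - dir (2 * real_of_int j * pi / real n))
    + (p - q) \<bullet> (dir (2 * real_of_int k * pi / real n) - dir (2 * real_of_int l * pi / real n))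
    \<le> 2 * peak n M"
proof -
  define c where "c = cos (pi / (2 * real n))"
  have c: "0 < c"
    unfolding c_def using n by (intro cos_pi_div_double_pos) auto
  have n0: "0 < n"
    using n by simp
  have le_abs: "(2 * sin (d * pi / real n)) * x \<le> 2 * c * \<bar>x\<bar>" for d :: int and x :: real
  proof -
    have "\<bar>2 * sin (d * pi / real n)\<bar> \<le> 2 * c"
      using abs_sin_int_pi_div_le[OF n(1), of d] unfolding c_def by simp
    then show ?thesis
      using mult_le_abs_mult_bound[of "2 * sin (d * pi / real n)" "2 * c" x] by (simp add: mult.commute)
  qed
  have "odd (2 * (i + j) + int n)" "odd (2 * (k + l) + int n)"
    using n by simp_all
  then obtain g1 g2 where
    g1: "odd g1" "\<bar>(p + q) \<bullet> dir ((2 * (i + j) + n) * pi / (2 * real n))\<bar> = (p + q) \<bullet> dir (g1 * pi / (2 * real n))" and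
    g2: "odd g2" "\<bar>(p - q) \<bullet> dir ((2 * (k + l) + n) * pi / (2 * real n))\<bar> = (p - q) \<bullet> dir (g2 * pi / (2 * real n))"
    by (metis abs_inner_dir_odd_shift[OF n0])
  have "(p + q) \<bullet> (dir (2 * real_of_int i * pi / real n) - dir (2 * real_of_int j * pi / real n))
      + (p - q) \<bullet> (dir (2 * real_of_int k * pi / real n) - dir (2 * real_of_int l * pi / real n))
    \<le> 2 * c * \<bar>(p + q) \<bullet> dir ((2 * (i + j) + n) * pi / (2 * real n))\<bar>
      + 2 * c * \<bar>(p - q) \<bullet> dir ((2 * (k + l) + n) * pi / (2 * real n))\<bar>"
    unfolding dir_diff_dir_roots[OF n0] inner_scaleR_right by (intro add_mono le_abs)
  also have "\<dots> = 2 * c * ((p + q) \<bullet> dir (g1 * pi / (2 * real n)) + (p - q) \<bullet> dir (g2 * pi / (2 * real n)))"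
    unfolding g1(2) g2(2) by (simp add: distrib_left)
  also have "\<dots> \<le> 2 * c * (peak n M / c)"
    using osc_pair_le_peak[OF n M p q g1(1) g2(1)] c by (intro mult_left_mono) (simp_all add: c_def)
  finally show ?thesis
    using c by simp
qed

section \<open>Effects and norms on the polygon\<close>

definition vertex_int :: "nat \<Rightarrow> int \<Rightarrow> real^3" where
  "vertex_int n j = vector [rn n * cos (2 * real_of_int j * pi / real n), rn n * sin (2 * real_of_int j * pi / real n), 1]"

lemma vertex_int_of_nat: "vertex_int n (int k) = vertex n k"
  by (simp add: vertex_int_def vertex_def)

lemma vertex_int_mod: "vertex_int n (j mod int n) = vertex_int n j"
proof (cases "n = 0")
  case False
  have "real_of_int j = real_of_int (j mod int n) + real n * real_of_int (j div int n)"
    by (metis mod_div_mult_eq mult.commute of_int_add of_int_mult of_int_of_nat_eq)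
  then have "2 * real_of_int j * pi / real n = 2 * real_of_int (j mod int n) * pi / real n + 2 * pi * real_of_int (j div int n)"
    using False by (simp add: field_simps)
  then show ?thesis
    by (simp add: vertex_int_def cos_add sin_add)
qed simp

lemma vertex_int_in_vertices:
  assumes "0 < n"
  shows "vertex_int n j \<in> vertex n ` {1..n}"
proof (cases "j mod int n = 0")
  case True
  then have "vertex_int n j = vertex_int n (int n)"
    by (metis vertex_int_mod mod_self)
  then show ?thesis
    using assms by (simp add: vertex_int_of_nat)
next
  case False
  have "0 \<le> j mod int n" "j mod int n < int n"
    using assms by simp_all
  then have "nat (j mod int n) \<in> {1..n}"
    using False by auto
  then show ?thesis
    by (metis vertex_int_mod vertex_int_of_nat image_eqI \<open>0 \<le> j mod int n\<close> int_nat_eq)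
qed

lemma inner_vertex_int:
  "f \<bullet> vertex_int n j = f $ 3 + rn n * ((f $ 1, f $ 2) \<bullet> dir (2 * real_of_int j * pi / real n))"
  by (simp add: vertex_int_def dir_def inner_vec_def sum_3 algebra_simps)

lemma inner_vertex_int_diff:
  "f \<bullet> vertex_int n i - f \<bullet> vertex_int n j
    = (rn n *\<^sub>R (f $ 1, f $ 2)) \<bullet> (dir (2 * real_of_int i * pi / real n) - dir (2 * real_of_int j * pi / real n))"
  unfolding inner_vertex_int inner_diff_right inner_scaleR_left by (simp add: algebra_simps)

lemma unit_eff_inner_vertex_int [simp]: "unit_eff \<bullet> vertex_int n j = 1"
  by (simp add: unit_eff_def vertex_int_def inner_vec_def sum_3)

lemma ngon_subset_slab:
  assumes "\<forall>k\<in>{1..n}. a \<le> f \<bullet> vertex n k \<and> f \<bullet> vertex n k \<le> b"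
  shows "ngon n \<subseteq> {s. a \<le> f \<bullet> s \<and> f \<bullet> s \<le> b}"
proof -
  have "convex {s. a \<le> f \<bullet> s \<and> f \<bullet> s \<le> b}"
    using convex_Int[OF convex_halfspace_ge[of a f] convex_halfspace_le[of f b]]
    by (simp add: Int_def conj_commute)
  then show ?thesis
    unfolding ngon_def using assms by (intro hull_minimal) auto
qed

lemma vertex_in_ngon: "k \<in> {1..n} \<Longrightarrow> vertex n k \<in> ngon n"
  unfolding ngon_def by (rule hull_inc) auto

lemma vertex_int_in_ngon:
  assumes "0 < n"
  shows "vertex_int n j \<in> ngon n"
proof -
  obtain k where "vertex_int n j = vertex n k" "k \<in> {1..n}"
    using vertex_int_in_vertices[OF assms, of j] by (rule imageE)
  then show ?thesis
    by (simp add: vertex_in_ngon)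
qed

lemma gnorm_eq_Max:
  assumes "0 < n"
  shows "gnorm n f = Max ((\<lambda>k. \<bar>f \<bullet> vertex n k\<bar>) ` {1..n})"
proof -
  define m where "m = Max ((\<lambda>k. \<bar>f \<bullet> vertex n k\<bar>) ` {1..n})"
  have "\<bar>f \<bullet> vertex n k\<bar> \<le> m" if "k \<in> {1..n}" for k
    unfolding m_def using that by (intro Max_ge) auto
  then have "\<forall>k\<in>{1..n}. - m \<le> f \<bullet> vertex n k \<and> f \<bullet> vertex n k \<le> m"
    by (meson abs_le_D1 abs_le_D2 minus_le_iff)
  then have "ngon n \<subseteq> {s. - m \<le> f \<bullet> s \<and> f \<bullet> s \<le> m}"
    by (rule ngon_subset_slab)
  then have bound: "\<bar>f \<bullet> s\<bar> \<le> m" if "s \<in> ngon n" for s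
  proof -
    have "- m \<le> f \<bullet> s" "f \<bullet> s \<le> m"
      using \<open>ngon n \<subseteq> _\<close> that by auto
    then show ?thesis
      by linarith
  qed
  have "m \<in> (\<lambda>k. \<bar>f \<bullet> vertex n k\<bar>) ` {1..n}"
    unfolding m_def using assms by (intro Max_in) auto
  then obtain k where k: "k \<in> {1..n}" "m = \<bar>f \<bullet> vertex n k\<bar>"
    by blast
  have "ngon n \<noteq> {}"
    using vertex_in_ngon[of 1 n] assms by auto
  have "gnorm n f = m"
  proof (rule antisym)
    show "gnorm n f \<le> m"
      unfolding gnorm_def using \<open>ngon n \<noteq> {}\<close> bound by (rule cSUP_least)
    show "m \<le> gnorm n f"
      unfolding gnorm_def k(2) by (rule cSUP_upper[OF vertex_in_ngon[OF k(1)] bdd_aboveI2[OF bound]])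
  qed
  then show ?thesis
    by (simp add: m_def)
qed

lemma abs_inner_vertex_int_le_gnorm:
  assumes "0 < n"
  shows "\<bar>f \<bullet> vertex_int n j\<bar> \<le> gnorm n f"
proof -
  obtain k where "vertex_int n j = vertex n k" "k \<in> {1..n}"
    using vertex_int_in_vertices[OF assms, of j] by (rule imageE)
  then have "\<bar>f \<bullet> vertex_int n j\<bar> \<in> (\<lambda>k. \<bar>f \<bullet> vertex n k\<bar>) ` {1..n}"
    by simp
  then show ?thesis
    unfolding gnorm_eq_Max[OF assms] by (rule Max_ge[rotated]) simp
qed

lemma gnorm_attained:
  assumes "0 < n"
  obtains j where "gnorm n f = \<bar>f \<bullet> vertex_int n j\<bar>"
proof -
  have "gnorm n f \<in> (\<lambda>k. \<bar>f \<bullet> vertex n k\<bar>) ` {1..n}"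
    unfolding gnorm_eq_Max[OF assms] using assms by (intro Max_in) auto
  then obtain k where "gnorm n f = \<bar>f \<bullet> vertex n k\<bar>"
    by blast
  then show ?thesis
    using that[of "int k"] unfolding vertex_int_of_nat by blast
qed

lemma inner_vertex_int_le_gnorm: "0 < n \<Longrightarrow> f \<bullet> vertex_int n j \<le> gnorm n f"
  using abs_inner_vertex_int_le_gnorm abs_ge_self order_trans by blast

lemma is_effect_iff_vertex_int:
  assumes "0 < n"
  shows "is_effect n e \<longleftrightarrow> (\<forall>j. 0 \<le> e \<bullet> vertex_int n j \<and> e \<bullet> vertex_int n j \<le> 1)"
proof
  assume "is_effect n e"
  then show "\<forall>j. 0 \<le> e \<bullet> vertex_int n j \<and> e \<bullet> vertex_int n j \<le> 1"
    unfolding is_effect_def using vertex_int_in_ngon[OF assms] by blast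
next
  assume "\<forall>j. 0 \<le> e \<bullet> vertex_int n j \<and> e \<bullet> vertex_int n j \<le> 1"
  then have "\<forall>k\<in>{1..n}. 0 \<le> e \<bullet> vertex n k \<and> e \<bullet> vertex n k \<le> 1"
    by (metis vertex_int_of_nat)
  then show "is_effect n e"
    unfolding is_effect_def using ngon_subset_slab by blast
qed

lemma effect_osc_le_one:
  assumes "0 < n" "is_effect n e"
  shows "osc_le_one n (rn n *\<^sub>R (e $ 1, e $ 2))"
  unfolding osc_le_one_def
proof (intro allI)
  fix i j :: int
  have "0 \<le> e \<bullet> vertex_int n i" "e \<bullet> vertex_int n i \<le> 1" "0 \<le> e \<bullet> vertex_int n j" "e \<bullet> vertex_int n j \<le> 1"
    using assms by (auto simp: is_effect_iff_vertex_int)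
  then show "\<bar>(rn n *\<^sub>R (e $ 1, e $ 2)) \<bullet> (dir (2 * real_of_int i * pi / real n) - dir (2 * real_of_int j * pi / real n))\<bar> \<le> 1"
    unfolding inner_vertex_int_diff[symmetric] by linarith
qed

lemma Pbar_complement_ge:
  assumes "0 < n"
  shows "4 + ((a + b) \<bullet> vertex_int n i - (a + b) \<bullet> vertex_int n j)
      + ((a - b) \<bullet> vertex_int n k - (a - b) \<bullet> vertex_int n l)
    \<le> 8 * Pbar n (a, unit_eff - a) (b, unit_eff - b)"
proof -
  have "(a + b) \<bullet> vertex_int n i \<le> gnorm n (a + b)"
    using assms by (rule inner_vertex_int_le_gnorm)
  moreover have "1 + (a - b) \<bullet> vertex_int n k \<le> gnorm n (a + (unit_eff - b))"
    using inner_vertex_int_le_gnorm[OF assms, of "a + (unit_eff - b)" k]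
    unfolding inner_add_left inner_diff_left unit_eff_inner_vertex_int by simp
  moreover have "1 - (a - b) \<bullet> vertex_int n l \<le> gnorm n ((unit_eff - a) + b)"
    using inner_vertex_int_le_gnorm[OF assms, of "(unit_eff - a) + b" l]
    unfolding inner_add_left inner_diff_left unit_eff_inner_vertex_int by simp
  moreover have "2 - (a + b) \<bullet> vertex_int n j \<le> gnorm n ((unit_eff - a) + (unit_eff - b))"
    using inner_vertex_int_le_gnorm[OF assms, of "(unit_eff - a) + (unit_eff - b)" j]
    unfolding inner_add_left inner_diff_left unit_eff_inner_vertex_int by simp
  ultimately show ?thesis
    unfolding Pbar_def fst_conv snd_conv by simp
qed

lemma Pbar_complement_attained:
  assumes n: "0 < n" and a: "is_effect n a" and b: "is_effect n b"
  obtains i j k l where "8 * Pbar n (a, unit_eff - a) (b, unit_eff - b)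
    = 4 + ((a + b) \<bullet> vertex_int n i - (a + b) \<bullet> vertex_int n j)
      + ((a - b) \<bullet> vertex_int n k - (a - b) \<bullet> vertex_int n l)"
proof -
  have ab: "0 \<le> a \<bullet> vertex_int n x" "a \<bullet> vertex_int n x \<le> 1" "0 \<le> b \<bullet> vertex_int n x" "b \<bullet> vertex_int n x \<le> 1" for x
    using a b n by (simp_all add: is_effect_iff_vertex_int)
  obtain i where i: "gnorm n (a + b) = \<bar>(a + b) \<bullet> vertex_int n i\<bar>"
    using gnorm_attained[OF n] .
  obtain k where k: "gnorm n (a + (unit_eff - b)) = \<bar>(a + (unit_eff - b)) \<bullet> vertex_int n k\<bar>"
    using gnorm_attained[OF n] .
  obtain l where l: "gnorm n ((unit_eff - a) + b) = \<bar>((unit_eff - a) + b) \<bullet> vertex_int n l\<bar>"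
    using gnorm_attained[OF n] .
  obtain j where j: "gnorm n ((unit_eff - a) + (unit_eff - b)) = \<bar>((unit_eff - a) + (unit_eff - b)) \<bullet> vertex_int n j\<bar>"
    using gnorm_attained[OF n] .
  have "gnorm n (a + b) = (a + b) \<bullet> vertex_int n i"
    using ab[of i] unfolding i inner_add_left by simp
  moreover have "gnorm n (a + (unit_eff - b)) = 1 + (a - b) \<bullet> vertex_int n k"
    using ab[of k] unfolding k inner_add_left inner_diff_left unit_eff_inner_vertex_int by simp
  moreover have "gnorm n ((unit_eff - a) + b) = 1 - (a - b) \<bullet> vertex_int n l"
    using ab[of l] unfolding l inner_add_left inner_diff_left unit_eff_inner_vertex_int by simp
  moreover have "gnorm n ((unit_eff - a) + (unit_eff - b)) = 2 - (a + b) \<bullet> vertex_int n j"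
    using ab[of j] unfolding j inner_add_left inner_diff_left unit_eff_inner_vertex_int by simp
  ultimately show ?thesis
    using that[of i j k l] unfolding Pbar_def fst_conv snd_conv by simp
qed

section \<open>The optimal pair of measurements\<close>

lemma Pbar_le_peak:
  fixes n :: nat and M :: int
  assumes n: "odd n" "3 \<le> n" and M: "4 * M - 2 \<le> n" "n \<le> 4 * M + 1"
    and a: "is_effect n a" and b: "is_effect n b"
  shows "Pbar n (a, unit_eff - a) (b, unit_eff - b) \<le> (2 + peak n M) / 4"
proof -
  have n0: "0 < n"
    using n by simp
  obtain i j k l where Pbar: "8 * Pbar n (a, unit_eff - a) (b, unit_eff - b)
    = 4 + ((a + b) \<bullet> vertex_int n i - (a + b) \<bullet> vertex_int n j)
      + ((a - b) \<bullet> vertex_int n k - (a - b) \<bullet> vertex_int n l)"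
    using Pbar_complement_attained[OF n0 a b] .
  define p where "p = rn n *\<^sub>R (a $ 1, a $ 2)"
  define q where "q = rn n *\<^sub>R (b $ 1, b $ 2)"
  have "((a + b) \<bullet> vertex_int n i - (a + b) \<bullet> vertex_int n j)
      + ((a - b) \<bullet> vertex_int n k - (a - b) \<bullet> vertex_int n l)
    = (p + q) \<bullet> (dir (2 * real_of_int i * pi / real n) - dir (2 * real_of_int j * pi / real n))
      + (p - q) \<bullet> (dir (2 * real_of_int k * pi / real n) - dir (2 * real_of_int l * pi / real n))"
    unfolding inner_add_left inner_diff_left p_def q_def inner_vertex_int_diff[symmetric] by simp
  also have "\<dots> \<le> 2 * peak n M"
    using n M effect_osc_le_one[OF n0 a] effect_osc_le_one[OF n0 b] unfolding p_def q_def
    by (rule osc_sum_diff_le_peak)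
  finally show ?thesis
    using Pbar by simp
qed

definition rot_effect :: "nat \<Rightarrow> int \<Rightarrow> real^3" where
  "rot_effect n m = vector
    [cos (2 * real_of_int m * pi / real n) / (rn n * (1 + cos (pi / real n))),
     sin (2 * real_of_int m * pi / real n) / (rn n * (1 + cos (pi / real n))),
     cos (pi / real n) / (1 + cos (pi / real n))]"

lemma inner_rot_effect:
  fixes n :: nat and m j :: int
  assumes "3 \<le> n"
  shows "rot_effect n m \<bullet> vertex_int n j
    = (cos (2 * real_of_int (j - m) * pi / real n) + cos (pi / real n)) / (1 + cos (pi / real n))"
proof -
  let ?C = "cos (pi / real n)" and ?\<theta> = "2 * real_of_int j * pi / real n" and ?\<phi> = "2 * real_of_int m * pi / real n"
  have "0 < ?C"
    using assms by (intro cos_pi_div_pos) simp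
  then have pos: "0 < rn n" "0 < 1 + ?C"
    by (simp_all add: rn_def)
  have "rot_effect n m \<bullet> vertex_int n j
      = ?C / (1 + ?C) + rn n * (cos ?\<phi> / (rn n * (1 + ?C)) * cos ?\<theta> + sin ?\<phi> / (rn n * (1 + ?C)) * sin ?\<theta>)"
    by (simp add: rot_effect_def inner_vertex_int dir_def)
  also have "\<dots> = (cos ?\<theta> * cos ?\<phi> + sin ?\<theta> * sin ?\<phi> + ?C) / (1 + ?C)"
    using pos by (simp add: divide_simps)
  also have "cos ?\<theta> * cos ?\<phi> + sin ?\<theta> * sin ?\<phi> = cos (2 * real_of_int (j - m) * pi / real n)"
    unfolding cos_diff[symmetric] using assms by (simp add: field_simps)
  finally show ?thesis .
qed

lemma rot_effect_is_effect:
  assumes "odd n" "3 \<le> n"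
  shows "is_effect n (rot_effect n m)"
  unfolding is_effect_iff_vertex_int[OF odd_pos[OF assms(1)]] inner_rot_effect[OF assms(2)]
proof (intro conjI allI)
  fix j
  have "0 < cos (pi / real n)"
    using assms by (intro cos_pi_div_pos) simp
  moreover have "- cos (pi / real n) \<le> cos (2 * real_of_int (j - m) * pi / real n)"
    using assms(1) by (rule neg_cos_pi_div_le)
  moreover have "cos (2 * real_of_int (j - m) * pi / real n) \<le> 1"
    by simp
  ultimately show "0 \<le> (cos (2 * real_of_int (j - m) * pi / real n) + cos (pi / real n)) / (1 + cos (pi / real n))"
    and "(cos (2 * real_of_int (j - m) * pi / real n) + cos (pi / real n)) / (1 + cos (pi / real n)) \<le> 1"
    by simp_all
qed

lemma inner_rot_effect_add_diff:
  fixes n :: nat and M j :: int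
  assumes "3 \<le> n"
  defines "C \<equiv> cos (pi / real n)"
  shows "(rot_effect n 0 + rot_effect n M) \<bullet> vertex_int n j
      = (2 * cos ((2 * j - M) * pi / real n) * cos (M * pi / real n) + 2 * C) / (1 + C)"
    and "(rot_effect n 0 - rot_effect n M) \<bullet> vertex_int n j
      = - 2 * sin ((2 * j - M) * pi / real n) * sin (M * pi / real n) / (1 + C)"
proof -
  let ?\<theta> = "2 * real_of_int j * pi / real n" and ?\<phi> = "2 * real_of_int (j - M) * pi / real n"
  have half_angles: "(?\<theta> + ?\<phi>) / 2 = (2 * j - M) * pi / real n" "(?\<theta> - ?\<phi>) / 2 = M * pi / real n"
    "(?\<phi> - ?\<theta>) / 2 = - (M * pi / real n)"
    using assms by (simp_all add: field_simps)
  have "(rot_effect n 0 + rot_effect n M) \<bullet> vertex_int n j = ((cos ?\<theta> + C) + (cos ?\<phi> + C)) / (1 + C)"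
    using assms by (simp only: inner_add_left inner_rot_effect add_divide_distrib diff_zero C_def)
  also have "(cos ?\<theta> + C) + (cos ?\<phi> + C) = 2 * cos ((2 * j - M) * pi / real n) * cos (M * pi / real n) + 2 * C"
    using cos_plus_cos[of ?\<theta> ?\<phi>] unfolding half_angles by simp
  finally show "(rot_effect n 0 + rot_effect n M) \<bullet> vertex_int n j
      = (2 * cos ((2 * j - M) * pi / real n) * cos (M * pi / real n) + 2 * C) / (1 + C)" .
  have "(rot_effect n 0 - rot_effect n M) \<bullet> vertex_int n j = (cos ?\<theta> - cos ?\<phi>) / (1 + C)"
    using assms by (simp add: inner_diff_left inner_rot_effect add_divide_distrib diff_divide_distrib C_def)
  also have "cos ?\<theta> - cos ?\<phi> = - 2 * sin ((2 * j - M) * pi / real n) * sin (M * pi / real n)"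
    using cos_diff_cos[of ?\<theta> ?\<phi>] unfolding half_angles by simp
  finally show "(rot_effect n 0 - rot_effect n M) \<bullet> vertex_int n j
      = - 2 * sin ((2 * j - M) * pi / real n) * sin (M * pi / real n) / (1 + C)" .
qed

lemma peak_le_Pbar_rot_effect:
  fixes n :: nat and M :: int
  assumes n: "odd n" "3 \<le> n"
  defines "a \<equiv> rot_effect n 0" and "b \<equiv> rot_effect n M"
  shows "(2 + peak n M) / 4 \<le> Pbar n (a, unit_eff - a) (b, unit_eff - b)"
proof -
  define C where "C = cos (pi / real n)"
  define c where "c = cos (pi / (2 * real n))"
  have c: "0 < c"
    unfolding c_def using n by (intro cos_pi_div_double_pos) simp
  have C: "1 + C = 2 * c^2"
    unfolding C_def c_def cos_pi_div_eq by simp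
  obtain i1 i2 where i: "cos ((2 * i1 - M) * pi / real n) - cos ((2 * i2 - M) * pi / real n) = 1 + C"
    using obtain_cos_diff_eq[OF n(1)] unfolding C_def .
  obtain k1 k2 where k: "sin ((2 * k1 - M) * pi / real n) - sin ((2 * k2 - M) * pi / real n) = 2 * c"
    using obtain_sin_diff_eq[OF n(1)] unfolding c_def .
  have "(a + b) \<bullet> vertex_int n i1 - (a + b) \<bullet> vertex_int n i2
      = 2 * cos (M * pi / real n) * (cos ((2 * i1 - M) * pi / real n) - cos ((2 * i2 - M) * pi / real n)) / (1 + C)"
    unfolding a_def b_def inner_rot_effect_add_diff[OF n(2)] C_def[symmetric] diff_divide_distrib[symmetric]
    by (simp add: algebra_simps)
  also have "\<dots> = 2 * cos (M * pi / real n)"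
    using c unfolding i C by simp
  finally have sum: "(a + b) \<bullet> vertex_int n i1 - (a + b) \<bullet> vertex_int n i2 = 2 * cos (M * pi / real n)" .
  have "(a - b) \<bullet> vertex_int n k2 - (a - b) \<bullet> vertex_int n k1
      = 2 * sin (M * pi / real n) * (sin ((2 * k1 - M) * pi / real n) - sin ((2 * k2 - M) * pi / real n)) / (1 + C)"
    unfolding a_def b_def inner_rot_effect_add_diff[OF n(2)] C_def[symmetric] diff_divide_distrib[symmetric]
    by (simp add: algebra_simps)
  also have "\<dots> = 2 * sin (M * pi / real n) / c"
    using c unfolding k C by (simp add: power2_eq_square)
  finally have diff: "(a - b) \<bullet> vertex_int n k2 - (a - b) \<bullet> vertex_int n k1 = 2 * sin (M * pi / real n) / c" .
  have "4 + ((a + b) \<bullet> vertex_int n i1 - (a + b) \<bullet> vertex_int n i2)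
      + ((a - b) \<bullet> vertex_int n k2 - (a - b) \<bullet> vertex_int n k1)
    \<le> 8 * Pbar n (a, unit_eff - a) (b, unit_eff - b)"
    using n by (intro Pbar_complement_ge) simp
  then show ?thesis
    unfolding sum diff by (simp add: peak_def c_def)
qed

lemma dichotomicE:
  assumes "dichotomic n P"
  obtains e where "P = (e, unit_eff - e)" "is_effect n e"
proof -
  have "snd P = unit_eff - fst P"
    using assms by (simp add: dichotomic_def eq_diff_eq add.commute)
  then show ?thesis
    using that[of "fst P"] assms by (simp add: dichotomic_def prod_eq_iff)
qed

lemma Pbar_values_le_peak:
  fixes n :: nat and M :: int
  assumes n: "odd n" "3 \<le> n" and M: "4 * M - 2 \<le> n" "n \<le> 4 * M + 1"
    and y: "y \<in> Pbar_values n"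
  shows "y \<le> (2 + peak n M) / 4"
proof -
  obtain P1 P2 where "y = Pbar n P1 P2" "dichotomic n P1" "dichotomic n P2"
    using y unfolding Pbar_values_def by blast
  then show ?thesis
    by (metis dichotomicE Pbar_le_peak[OF n M])
qed

lemma peak_in_Pbar_values:
  fixes n :: nat and M :: int
  assumes n: "odd n" "3 \<le> n" and M: "4 * M - 2 \<le> n" "n \<le> 4 * M + 1"
  shows "(2 + peak n M) / 4 \<in> Pbar_values n"
proof -
  define a where "a = rot_effect n 0"
  define b where "b = rot_effect n M"
  have eff: "is_effect n a" "is_effect n b" "is_effect n (unit_eff - a)" "is_effect n (unit_eff - b)"
    using rot_effect_is_effect[OF n] n unfolding a_def b_def
    by (auto simp: is_effect_iff_vertex_int inner_diff_left)
  then have "dichotomic n (a, unit_eff - a)" "dichotomic n (b, unit_eff - b)"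
    by (simp_all add: dichotomic_def)
  moreover have "(2 + peak n M) / 4 = Pbar n (a, unit_eff - a) (b, unit_eff - b)"
    using Pbar_le_peak[OF n M eff(1,2)] peak_le_Pbar_rot_effect[OF n, of M]
    unfolding a_def b_def by simp
  ultimately show ?thesis
    unfolding Pbar_values_def by blast
qed

theorem mainTheorem16:
  fixes n m :: nat
  assumes "odd n" and "n \<ge> 5" and "m \<ge> 1"
  shows "(n = 4*m + 1 \<longrightarrow>
            (let v = (2 + cos (real m * pi / real n)
                        + (1 / cos (pi / (2 * real n))) * sin (real m * pi / real n)) / 4
             in v \<in> Pbar_values n \<and> (\<forall>y\<in>Pbar_values n. y \<le> v)))
       \<and> (n = 4*m + 3 \<longrightarrow>
            (let v = (2 + cos (real (m+1) * pi / real n)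
                        + (1 / cos (pi / (2 * real n))) * sin (real (m+1) * pi / real n)) / 4
             in v \<in> Pbar_values n \<and> (\<forall>y\<in>Pbar_values n. y \<le> v)))"
proof -
  have n: "odd n" "3 \<le> n"
    using assms by simp_all
  have greatest: "(2 + peak n M) / 4 \<in> Pbar_values n \<and> (\<forall>y\<in>Pbar_values n. y \<le> (2 + peak n M) / 4)"
    if "4 * M - 2 \<le> n" "n \<le> 4 * M + 1" for M :: int
    using peak_in_Pbar_values[OF n that] Pbar_values_le_peak[OF n that] by blast
  have v: "(2 + cos (real m * pi / real n) + (1 / cos (pi / (2 * real n))) * sin (real m * pi / real n)) / 4
      = (2 + peak n (int m)) / 4"
    "(2 + cos (real (m+1) * pi / real n) + (1 / cos (pi / (2 * real n))) * sin (real (m+1) * pi / real n)) / 4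
      = (2 + peak n (int (m + 1))) / 4"
    by (simp_all add: peak_def)
  show ?thesis
    unfolding Let_def v by (rule conjI; intro impI greatest) simp_all
qed

end
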